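(* Let $A$ be a cartesian cubical set. The canonical map $p:A^{\mathrm{I}}\to A\times A$ has the path-lifting property if and only if $A$ has $2$-box filling.
   Context: Cartesian cubical sets are presheaves on $\mathbb{B}^{op}$, where $\mathbb{B}$ is the category of finite sets $[n]=\{\bot,x_1,\dots,x_n,\top\}$ ($n\ge0$, $\bot\ne\top$) and functions preserving $\bot,\top$. $\mathrm{I}^n$ is the representable on $[n]$, $\mathrm{I}^n\cong\mathrm{I}\times\dots\times\mathrm{I}$ with $\mathrm{I}=\mathrm{I}^1$, $\mathrm{I}^0=1$; the two maps $[1]\to[0]$ in $\mathbb{B}$ give endpoints $0,1:1\to\mathrm{I}$, and $\partial\mathrm{I}=1+1\to\mathrm{I}$ is their copairing. $p:A^{\mathrm{I}}\to A^{\partial\mathrm{I}}\cong A\times A$ is induced by $\partial\mathrm{I}\to\mathrm{I}$. A map $q:E\to D$ has the path-lifting property if for each endpoint $\delta\in\{0,1\}$, $\delta:1\to\mathrm{I}$, every commutative square with $\delta$ on the left and $q$ on the right (i.e. maps $u:1\to E$, $v:\mathrm{I}\to D$ with $qu=v\delta$) has a diagonal filler $w:\mathrm{I}\to E$ with $w\delta=u$, $qw=v$. For $1\le i\le n$ and $d\in\{0,1\}$, the face $\alpha_i^d:\mathrm{I}^{n-1}\to\mathrm{I}^n$ inserts the endpoint $d$ in the $i$-th coordinate. For $e\in\{0,1\}$, the open box $\sqcup^n_e\rightarrowtail\mathrm{I}^n$ is the union in the subobject lattice of $\mathrm{I}^n$ of the images of all faces $\alpha_i^d$ with $(i,d)\ne(1,e)$.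 A cubical set $A$ has $n$-box filling if for each $e\in\{0,1\}$ every map $\sqcup^n_e\to A$ extends along the inclusion $\sqcup^n_e\rightarrowtail\mathrm{I}^n$. *)

theory Defs
  imports Main
begin

section \<open>The category B of bipointed finite sets [n] = {Bot, x_1..x_n, Top}\<close>

datatype bpt = Bot | Top | Var nat

definition obj :: "nat \<Rightarrow> bpt set" where
  "obj n = {Bot, Top} \<union> Var ` {1..n}"

text \<open>A morphism [n] -> [m] of B, represented extensionally: it preserves Bot and Top,
  maps [n] into [m], and is normalised to Bot outside [n].\<close>
definition Bmor :: "nat \<Rightarrow> nat \<Rightarrow> (bpt \<Rightarrow> bpt) \<Rightarrow> bool" where
  "Bmor n m f \<longleftrightarrow> f Bot = Bot \<and> f Top = Top \<and> (\<forall>i\<in>{1..n}. f (Var i) \<in> obj m)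
     \<and> (\<forall>i. i \<notin> {1..n} \<longrightarrow> f (Var i) = Bot)"

definition idB :: "nat \<Rightarrow> bpt \<Rightarrow> bpt" where
  "idB n = (\<lambda>z. if z \<in> obj n then z else Bot)"

section \<open>Cartesian cubical sets: functors B -> Set (presheaves on B^op)\<close>

record 'a cset =
  cells :: "nat \<Rightarrow> 'a set"
  act :: "nat \<Rightarrow> nat \<Rightarrow> (bpt \<Rightarrow> bpt) \<Rightarrow> 'a \<Rightarrow> 'a"

definition cubical_set :: "'a cset \<Rightarrow> bool" where
  "cubical_set X \<longleftrightarrow>
     (\<forall>n m f x. Bmor n m f \<and> x \<in> cells X n \<longrightarrow> act X n m f x \<in> cells X m) \<and>
     (\<forall>n x. x \<in> cells X n \<longrightarrow> act X n n (idB n) x = x) \<and>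
     (\<forall>n m k f g x. Bmor n m f \<and> Bmor m k g \<and> x \<in> cells X n \<longrightarrow>
        act X n k (g \<circ> f) x = act X m k g (act X n m f x))"

definition cmap :: "'a cset \<Rightarrow> 'b cset \<Rightarrow> (nat \<Rightarrow> 'a \<Rightarrow> 'b) \<Rightarrow> bool" where
  "cmap X Y \<phi> \<longleftrightarrow>
     (\<forall>n x. x \<in> cells X n \<longrightarrow> \<phi> n x \<in> cells Y n) \<and>
     (\<forall>n m f x. Bmor n m f \<and> x \<in> cells X n \<longrightarrow> \<phi> m (act X n m f x) = act Y n m f (\<phi> n x)) \<and>
     (\<forall>n x. x \<notin> cells X n \<longrightarrow> \<phi> n x = undefined)"

definition meq :: "'a cset \<Rightarrow> (nat \<Rightarrow> 'a \<Rightarrow> 'b) \<Rightarrow> (nat \<Rightarrow> 'a \<Rightarrow> 'b) \<Rightarrow> bool" where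
  "meq X \<phi> \<psi> \<longleftrightarrow> (\<forall>n. \<forall>x\<in>cells X n. \<phi> n x = \<psi> n x)"

definition cmp :: "(nat \<Rightarrow> 'b \<Rightarrow> 'c) \<Rightarrow> (nat \<Rightarrow> 'a \<Rightarrow> 'b) \<Rightarrow> nat \<Rightarrow> 'a \<Rightarrow> 'c" where
  "cmp \<psi> \<phi> = (\<lambda>n x. \<psi> n (\<phi> n x))"

text \<open>Representable I^k = Hom_B([k], -); I = I^1, terminal object 1 = I^0.\<close>
definition repr :: "nat \<Rightarrow> (bpt \<Rightarrow> bpt) cset" where
  "repr k = \<lparr> cells = (\<lambda>m. {f. Bmor k m f}), act = (\<lambda>n m g f. g \<circ> f) \<rparr>"

abbreviation II :: "(bpt \<Rightarrow> bpt) cset" where "II \<equiv> repr 1"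

definition prod_cs :: "'a cset \<Rightarrow> 'b cset \<Rightarrow> ('a \<times> 'b) cset" where
  "prod_cs X Y = \<lparr> cells = (\<lambda>n. cells X n \<times> cells Y n),
     act = (\<lambda>n m f (x, y). (act X n m f x, act Y n m f y)) \<rparr>"

text \<open>Exponential A^X of presheaves: (A^X)([c]) = Hom(y[c] \<times> X, A).\<close>
definition expo :: "'x cset \<Rightarrow> 'a cset \<Rightarrow> (nat \<Rightarrow> (bpt \<Rightarrow> bpt) \<times> 'x \<Rightarrow> 'a) cset" where
  "expo X A = \<lparr> cells = (\<lambda>c. {\<phi>. cmap (prod_cs (repr c) X) A \<phi>}),
     act = (\<lambda>n m f \<phi>. (\<lambda>k (g, x). if (g, x) \<in> cells (prod_cs (repr m) X) k
                                    then \<phi> k (g \<circ> f, x) else undefined)) \<rparr>"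

definition ep :: "bool \<Rightarrow> bpt \<Rightarrow> bpt" where
  "ep d = (\<lambda>z. case z of Bot \<Rightarrow> Bot | Top \<Rightarrow> Top
              | Var i \<Rightarrow> if i = 1 then (if d then Top else Bot) else Bot)"

text \<open>Endpoint maps 1 = I^0 -> I (Yoneda image of ep d).\<close>
definition endpt :: "bool \<Rightarrow> nat \<Rightarrow> (bpt \<Rightarrow> bpt) \<Rightarrow> (bpt \<Rightarrow> bpt)" where
  "endpt d = (\<lambda>k g. if Bmor 0 k g then g \<circ> ep d else undefined)"

text \<open>The canonical map p : A^I -> A^{\<partial>I} \<cong> A \<times> A (restriction along the endpoints,
  followed by the Yoneda isomorphism A^1 \<cong> A, i.e. evaluation at (id_c, endpoint)).\<close>
definition pmap :: "'a cset \<Rightarrow> nat \<Rightarrow> (nat \<Rightarrow> (bpt \<Rightarrow> bpt) \<times> (bpt \<Rightarrow> bpt) \<Rightarrow> 'a) \<Rightarrow> 'a \<times> 'a" where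
  "pmap A = (\<lambda>c \<phi>. if \<phi> \<in> cells (expo II A) c
                     then (\<phi> c (idB c, ep False), \<phi> c (idB c, ep True)) else undefined)"

definition path_lifting :: "'e cset \<Rightarrow> 'd cset \<Rightarrow> (nat \<Rightarrow> 'e \<Rightarrow> 'd) \<Rightarrow> bool" where
  "path_lifting E D q \<longleftrightarrow>
     (\<forall>d u v. cmap (repr 0) E u \<and> cmap II D v \<and> meq (repr 0) (cmp q u) (cmp v (endpt d)) \<longrightarrow>
        (\<exists>w. cmap II E w \<and> meq (repr 0) (cmp w (endpt d)) u \<and> meq II (cmp q w) v))"

text \<open>The B-map [n] -> [n-1] inducing the face alpha_i^d : I^{n-1} -> I^n.\<close>
definition face_s :: "nat \<Rightarrow> nat \<Rightarrow> bool \<Rightarrow> bpt \<Rightarrow> bpt" where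
  "face_s n i d = (\<lambda>z. case z of Bot \<Rightarrow> Bot | Top \<Rightarrow> Top
     | Var j \<Rightarrow> if 1 \<le> j \<and> j < i then Var j
               else if j = i then (if d then Top else Bot)
               else if i < j \<and> j \<le> n then Var (j - 1) else Bot)"

definition face_img :: "nat \<Rightarrow> nat \<Rightarrow> bool \<Rightarrow> nat \<Rightarrow> (bpt \<Rightarrow> bpt) set" where
  "face_img n i d m = {g \<circ> face_s n i d | g. Bmor (n - 1) m g}"

definition obox :: "nat \<Rightarrow> bool \<Rightarrow> (bpt \<Rightarrow> bpt) cset" where
  "obox n e = \<lparr> cells = (\<lambda>m. \<Union>{face_img n i d m | i d. 1 \<le> i \<and> i \<le> n \<and> (i, d) \<noteq> (1, e)}),
     act = (\<lambda>k m g f. g \<circ> f) \<rparr>"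

definition box_filling :: "nat \<Rightarrow> 'a cset \<Rightarrow> bool" where
  "box_filling n A \<longleftrightarrow>
     (\<forall>e \<phi>. cmap (obox n e) A \<phi> \<longrightarrow> (\<exists>\<psi>. cmap (repr n) A \<psi> \<and> meq (obox n e) \<psi> \<phi>))"

end

theory Submission
  imports Defs
begin

text \<open>By the exponential adjunction, a map \<open>w : I \<rightarrow> A\<^sup>I\<close> is the same as a map
  \<open>I \<times> I \<cong> I\<^sup>2 \<rightarrow> A\<close>, the first coordinate being the argument of \<open>w\<close>.
  A lifting problem for \<open>p\<close> at the endpoint \<open>d\<close>, given by \<open>u : 1 \<rightarrow> A\<^sup>I\<close> and
  \<open>v : I \<rightarrow> A \<times> A\<close>, prescribes such a square on the face \<open>x\<^sub>1 = d\<close> (by \<open>u\<close>) and on the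
  faces \<open>x\<^sub>2 = 0, 1\<close> (by \<open>v\<close>); commutativity \<open>p u = v \<delta>\<^sub>d\<close> says exactly that these
  agree at the corners, i.e.\ that they glue to a map on the open box \<open>\<sqcup>\<^sup>2\<^sub>\<not>\<^sub>d\<close>.
  A diagonal filler is then precisely a 2-cube extending this box map, and conversely every
  map on an open box arises this way from its restriction to these faces.\<close>

text \<open>The arity \<open>[1]\<close> is kept as the numeral \<open>1\<close>, so that simp rules about it apply.\<close>
declare One_nat_def [simp del]

lemma obj_simps [simp]: "Bot \<in> obj m" "Top \<in> obj m" "Var i \<in> obj m \<longleftrightarrow> 1 \<le> i \<and> i \<le> m"
  by (auto simp: obj_def)

lemma Bmor_comp: "Bmor n m f \<Longrightarrow> Bmor m k g \<Longrightarrow> Bmor n k (g \<circ> f)"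
  unfolding Bmor_def obj_def by fastforce

lemma Bmor_eqI:
  assumes "Bmor n m f" "Bmor n m' g" "\<And>i. 1 \<le> i \<Longrightarrow> i \<le> n \<Longrightarrow> f (Var i) = g (Var i)"
  shows "f = g"
proof
  fix z show "f z = g z"
  proof (cases z)
    case (Var i) then show ?thesis
      using assms by (cases "1 \<le> i \<and> i \<le> n") (auto simp: Bmor_def)
  qed (use assms in \<open>auto simp: Bmor_def\<close>)
qed

lemma Bmor_idB [simp]: "Bmor n n (idB n)"
  by (auto simp: Bmor_def idB_def)

lemma idB_comp: "Bmor n m f \<Longrightarrow> idB m \<circ> f = f"
  by (rule ext, case_tac x) (auto simp: Bmor_def idB_def)

lemma comp_idB: "Bmor n m f \<Longrightarrow> f \<circ> idB n = f"
  by (rule Bmor_eqI[of n m _ m]) (use Bmor_comp[OF Bmor_idB] in \<open>auto simp: idB_def\<close>)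

definition bmor0 :: "bpt \<Rightarrow> bpt" where
  "bmor0 = (\<lambda>z. if z = Top then Top else Bot)"

lemma Bmor_0_iff: "Bmor 0 k f \<longleftrightarrow> f = bmor0"
  by (auto simp: Bmor_def bmor0_def fun_eq_iff split: bpt.split_asm) (case_tac x; simp)

lemma comp_bmor0: "Bmor n m f \<Longrightarrow> f \<circ> bmor0 = bmor0"
  by (auto simp: Bmor_def bmor0_def)

definition bval :: "bool \<Rightarrow> bpt" where
  "bval b = (if b then Top else Bot)"

lemma bval_inject [simp]: "bval a = bval b \<longleftrightarrow> a = b"
  by (auto simp: bval_def)

lemma Bmor_bval: "Bmor n m f \<Longrightarrow> f (bval b) = bval b"
  by (auto simp: bval_def Bmor_def)

lemma Bmor_ep [simp]: "Bmor 1 k (ep d)"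
  by (auto simp: Bmor_def ep_def)

lemma ep_Var1 [simp]: "ep d (Var 1) = bval d"
  by (simp add: ep_def bval_def)

lemma comp_ep: "Bmor n m f \<Longrightarrow> f \<circ> ep d = ep d"
  by (rule ext, case_tac x) (auto simp: ep_def Bmor_def)

lemma Bmor1_eq_ep: "Bmor 1 k h \<Longrightarrow> h (Var 1) = bval d \<Longrightarrow> h = ep d"
  by (rule Bmor_eqI[of 1 k _ 0]) auto

lemma endpt_bmor0: "endpt d k bmor0 = ep d"
  using comp_ep[of 0 k bmor0] by (simp add: endpt_def Bmor_0_iff)

definition degen_s :: "nat \<Rightarrow> nat \<Rightarrow> bpt \<Rightarrow> bpt" where
  "degen_s n i = (\<lambda>z. case z of Bot \<Rightarrow> Bot | Top \<Rightarrow> Top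
     | Var j \<Rightarrow> if 1 \<le> j \<and> j < i then Var j else if i \<le> j \<and> j < n then Var (Suc j) else Bot)"

lemma Bmor_face_s: "1 \<le> i \<Longrightarrow> i \<le> n \<Longrightarrow> Bmor n (n - 1) (face_s n i d)"
  by (auto simp: Bmor_def face_s_def)

lemma Bmor_degen_s: "1 \<le> i \<Longrightarrow> i \<le> n \<Longrightarrow> Bmor (n - 1) n (degen_s n i)"
  by (auto simp: Bmor_def degen_s_def)

lemma degen_s_face_s:
  assumes g: "Bmor n m g" and i: "1 \<le> i" "i \<le> n" and gi: "g (Var i) = bval b"
  shows "g \<circ> degen_s n i \<circ> face_s n i b = g"
proof
  fix z show "(g \<circ> degen_s n i \<circ> face_s n i b) z = g z"
  proof (cases z)
    case (Var j)
    consider "j = 0" | "1 \<le> j \<and> j < i" | "j = i" | "i < j \<and> j \<le> n" | "n < j" by linarith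
    then show ?thesis using g i gi Var
      by cases (auto simp: face_s_def degen_s_def bval_def Bmor_def)
  qed (use g in \<open>auto simp: face_s_def degen_s_def Bmor_def\<close>)
qed

lemma face_img_eq:
  assumes "1 \<le> i" "i \<le> n"
  shows "face_img n i b m = {g. Bmor n m g \<and> g (Var i) = bval b}"
proof safe
  fix g assume "g \<in> face_img n i b m"
  then obtain g' where g: "g = g' \<circ> face_s n i b" "Bmor (n - 1) m g'" by (auto simp: face_img_def)
  then show "Bmor n m g" using Bmor_comp[OF Bmor_face_s] assms by blast
  show "g (Var i) = bval b" using g by (auto simp: face_s_def bval_def Bmor_def)
next
  fix g assume "Bmor n m g" "g (Var i) = bval b"
  then show "g \<in> face_img n i b m"
    using degen_s_face_s[of n m g i b] Bmor_comp[OF Bmor_degen_s] assms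
    unfolding face_img_def by (metis (mono_tags, lifting) mem_Collect_eq)
qed

lemma obox_cells:
  "g \<in> cells (obox n e) m \<longleftrightarrow>
     Bmor n m g \<and> (\<exists>i d. 1 \<le> i \<and> i \<le> n \<and> (i, d) \<noteq> (1, e) \<and> g (Var i) = bval d)"
proof -
  have "g \<in> cells (obox n e) m \<longleftrightarrow>
      (\<exists>i d. 1 \<le> i \<and> i \<le> n \<and> (i, d) \<noteq> (1, e) \<and> g \<in> face_img n i d m)"
    by (auto simp: obox_def)
  then show ?thesis
    by (auto simp: face_img_eq)
qed

lemma obox2_cells:
  "g \<in> cells (obox 2 e) m \<longleftrightarrow> Bmor 2 m g \<and> (g (Var 1) = bval (\<not> e) \<or> (\<exists>b. g (Var 2) = bval b))"
proof -
  have "(\<exists>i d. 1 \<le> i \<and> i \<le> (2::nat) \<and> (i, d) \<noteq> (1, e) \<and> g (Var i) = bval d)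
     \<longleftrightarrow> (\<exists>d. d \<noteq> e \<and> g (Var 1) = bval d) \<or> (\<exists>b. g (Var 2) = bval b)"
    by (auto simp: le_Suc_eq numeral_2_eq_2 One_nat_def)
  then show ?thesis by (auto simp: obox_cells)
qed

lemma repr_cells [simp]: "f \<in> cells (repr k) m \<longleftrightarrow> Bmor k m f"
  and repr_act [simp]: "act (repr k) n m g f = g \<circ> f"
  by (auto simp: repr_def)

lemma prod_cells [simp]: "(a, b) \<in> cells (prod_cs X Y) n \<longleftrightarrow> a \<in> cells X n \<and> b \<in> cells Y n"
  and prod_act [simp]: "act (prod_cs X Y) n m f (a, b) = (act X n m f a, act Y n m f b)"
  by (auto simp: prod_cs_def)

lemma expo_cells [simp]: "\<phi> \<in> cells (expo X A) c \<longleftrightarrow> cmap (prod_cs (repr c) X) A \<phi>"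
  by (auto simp: expo_def)

lemma expo_act_apply [simp]:
  "z \<in> cells (prod_cs (repr m) X) k \<Longrightarrow> act (expo X A) n m f \<phi> k z = \<phi> k (fst z \<circ> f, snd z)"
  by (auto simp: expo_def split: prod.split)

lemma expo_act_undefined [simp]:
  "z \<notin> cells (prod_cs (repr m) X) k \<Longrightarrow> act (expo X A) n m f \<phi> k z = undefined"
  by (auto simp: expo_def split: prod.split)

lemma obox_act [simp]: "act (obox n e) k m g f = g \<circ> f"
  by (simp add: obox_def)

lemma cmapD:
  assumes "cmap X Y \<phi>"
  shows "\<And>x n. x \<in> cells X n \<Longrightarrow> \<phi> n x \<in> cells Y n"
    "\<And>n m f x. Bmor n m f \<Longrightarrow> x \<in> cells X n \<Longrightarrow> \<phi> m (act X n m f x) = act Y n m f (\<phi> n x)"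
    "\<And>x n. x \<notin> cells X n \<Longrightarrow> \<phi> n x = undefined"
  using assms by (auto simp: cmap_def)

lemma cubical_setD:
  assumes "cubical_set X" "Bmor n m f" "x \<in> cells X n"
  shows "act X n m f x \<in> cells X m"
  using assms by (auto simp: cubical_set_def)

lemma cubical_set_comp:
  assumes "cubical_set X" "Bmor n m f" "Bmor m k g" "x \<in> cells X n"
  shows "act X n k (g \<circ> f) x = act X m k g (act X n m f x)"
  using assms by (auto simp: cubical_set_def)

lemma cubical_set_repr: "cubical_set (repr k)"
  by (auto simp: cubical_set_def idB_comp intro: Bmor_comp)

lemma cubical_set_prod: "cubical_set X \<Longrightarrow> cubical_set Y \<Longrightarrow> cubical_set (prod_cs X Y)"
  by (auto simp: cubical_set_def prod_cs_def)

lemma cubical_set_obox: "cubical_set (obox n e)"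
  unfolding cubical_set_def obox_cells by (auto simp: Bmor_bval idB_comp intro: Bmor_comp)

definition restr :: "'a cset \<Rightarrow> (nat \<Rightarrow> 'a \<Rightarrow> 'b) \<Rightarrow> nat \<Rightarrow> 'a \<Rightarrow> 'b" where
  "restr X \<phi> = (\<lambda>n x. if x \<in> cells X n then \<phi> n x else undefined)"

lemma restr_apply [simp]: "x \<in> cells X n \<Longrightarrow> restr X \<phi> n x = \<phi> n x"
  by (simp add: restr_def)

lemma cmap_restrI:
  assumes "cubical_set X"
    and "\<And>x n. x \<in> cells X n \<Longrightarrow> \<phi> n x \<in> cells Y n"
    and "\<And>n m f x. Bmor n m f \<Longrightarrow> x \<in> cells X n \<Longrightarrow> \<phi> m (act X n m f x) = act Y n m f (\<phi> n x)"
  shows "cmap X Y (restr X \<phi>)"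
  using assms by (auto simp: cmap_def restr_def cubical_set_def)

lemma cmap_restr_prodI:
  assumes "cubical_set X" "cubical_set Y"
    and "\<And>x y n. x \<in> cells X n \<Longrightarrow> y \<in> cells Y n \<Longrightarrow> \<phi> n (x, y) \<in> cells Z n"
    and "\<And>n m f x y. Bmor n m f \<Longrightarrow> x \<in> cells X n \<Longrightarrow> y \<in> cells Y n \<Longrightarrow>
           \<phi> m (act X n m f x, act Y n m f y) = act Z n m f (\<phi> n (x, y))"
  shows "cmap (prod_cs X Y) Z (restr (prod_cs X Y) \<phi>)"
  using assms by (intro cmap_restrI cubical_set_prod) auto

lemma cmap_eqI:
  assumes "cmap X Y \<phi>" "cmap X Y \<psi>" "meq X \<phi> \<psi>"
  shows "\<phi> = \<psi>"
proof (intro ext)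
  fix n x show "\<phi> n x = \<psi> n x"
    using assms cmapD(3)[OF assms(1)] cmapD(3)[OF assms(2)]
    by (cases "x \<in> cells X n") (auto simp: meq_def)
qed

definition curry_cs ::
    "'x cset \<Rightarrow> 'y cset \<Rightarrow> (nat \<Rightarrow> 'x \<times> 'y \<Rightarrow> 'a) \<Rightarrow> nat \<Rightarrow> 'x \<Rightarrow> nat \<Rightarrow> (bpt \<Rightarrow> bpt) \<times> 'y \<Rightarrow> 'a" where
  "curry_cs X Y \<psi> = restr X (\<lambda>k x. restr (prod_cs (repr k) Y) (\<lambda>m (a, y). \<psi> m (act X k m a x, y)))"

definition uncurry_cs ::
    "'x cset \<Rightarrow> 'y cset \<Rightarrow> (nat \<Rightarrow> 'x \<Rightarrow> nat \<Rightarrow> (bpt \<Rightarrow> bpt) \<times> 'y \<Rightarrow> 'a) \<Rightarrow> nat \<Rightarrow> 'x \<times> 'y \<Rightarrow> 'a" where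
  "uncurry_cs X Y w = restr (prod_cs X Y) (\<lambda>m (x, y). w m x m (idB m, y))"

lemma curry_cs_apply:
  "x \<in> cells X k \<Longrightarrow> Bmor k m a \<Longrightarrow> y \<in> cells Y m \<Longrightarrow>
     curry_cs X Y \<psi> k x m (a, y) = \<psi> m (act X k m a x, y)"
  by (simp add: curry_cs_def)

lemma uncurry_cs_apply:
  "x \<in> cells X m \<Longrightarrow> y \<in> cells Y m \<Longrightarrow> uncurry_cs X Y w m (x, y) = w m x m (idB m, y)"
  by (simp add: uncurry_cs_def)

lemma cmap_curry_cs:
  assumes X: "cubical_set X" and Y: "cubical_set Y" and \<psi>: "cmap (prod_cs X Y) A \<psi>"
  shows "cmap X (expo Y A) (curry_cs X Y \<psi>)"
proof -
  define slice where "slice k x = restr (prod_cs (repr k) Y) (\<lambda>m (a, y). \<psi> m (act X k m a x, y))"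
    for k x
  have slice: "cmap (prod_cs (repr k) Y) A (slice k x)" if x: "x \<in> cells X k" for k x
    unfolding slice_def
  proof (rule cmap_restr_prodI[OF cubical_set_repr Y], simp_all)
    fix a y m assume "Bmor k m a" "y \<in> cells Y m"
    then show "\<psi> m (act X k m a x, y) \<in> cells A m"
      using cmapD(1)[OF \<psi>] cubical_setD[OF X _ x] by simp
  next
    fix m m' f a y assume f: "Bmor m m' f" and a: "Bmor k m a" and y: "y \<in> cells Y m"
    have "act X k m' (f \<circ> a) x = act X m m' f (act X k m a x)"
      using cubical_set_comp[OF X a f x] .
    then show "\<psi> m' (act X k m' (f \<circ> a) x, act Y m m' f y) = act A m m' f (\<psi> m (act X k m a x, y))"
      using cmapD(2)[OF \<psi> f, of "(act X k m a x, y)"] cubical_setD[OF X a x] y by simp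
  qed
  have "slice k' (act X k k' f x) = act (expo Y A) k k' f (slice k x)"
    if f: "Bmor k k' f" and x: "x \<in> cells X k" for k k' f x
  proof (intro ext)
    fix m z show "slice k' (act X k k' f x) m z = act (expo Y A) k k' f (slice k x) m z"
    proof (cases z)
      case (Pair a y) then show ?thesis
        using cubical_set_comp[OF X f _ x] Bmor_comp[OF f]
        by (cases "Bmor k' m a \<and> y \<in> cells Y m") (auto simp: slice_def restr_def)
    qed
  qed
  moreover have "curry_cs X Y \<psi> = restr X slice"
    by (simp add: curry_cs_def slice_def[abs_def])
  ultimately show ?thesis
    using slice by (auto intro: cmap_restrI[OF X])
qed

lemma cmap_expo_apply:
  assumes w: "cmap X (expo Y A) w" and x: "x \<in> cells X n" and a: "Bmor n m a" and y: "y \<in> cells Y m"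
  shows "w n x m (a, y) = w m (act X n m a x) m (idB m, y)"
  using cmapD(2)[OF w a x] y a by (simp add: idB_comp)

lemma cmap_uncurry_cs:
  assumes X: "cubical_set X" and Y: "cubical_set Y" and w: "cmap X (expo Y A) w"
  shows "cmap (prod_cs X Y) A (uncurry_cs X Y w)"
  unfolding uncurry_cs_def
proof (rule cmap_restr_prodI[OF X Y], simp_all)
  fix x y n assume x: "x \<in> cells X n" and "y \<in> cells Y n"
  moreover have "cmap (prod_cs (repr n) Y) A (w n x)"
    using cmapD(1)[OF w x] by simp
  ultimately show "w n x n (idB n, y) \<in> cells A n"
    using cmapD(1)[of "prod_cs (repr n) Y" A "w n x" "(idB n, y)" n] by simp
next
  fix n m f x y assume f: "Bmor n m f" and x: "x \<in> cells X n" and y: "y \<in> cells Y n"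
  have wx: "cmap (prod_cs (repr n) Y) A (w n x)"
    using cmapD(1)[OF w x] by simp
  have "w m (act X n m f x) m (idB m, act Y n m f y) = w n x m (f \<circ> idB n, act Y n m f y)"
    using cmap_expo_apply[OF w x f cubical_setD[OF Y f y]] f by (simp add: comp_idB)
  also have "\<dots> = act A n m f (w n x n (idB n, y))"
    using cmapD(2)[OF wx f, of "(idB n, y)"] y by simp
  finally show "w m (act X n m f x) m (idB m, act Y n m f y) = act A n m f (w n x n (idB n, y))" .
qed

lemma cmap_glue:
  assumes X: "cubical_set X"
    and P: "\<And>n m f x. Bmor n m f \<Longrightarrow> x \<in> cells X n \<Longrightarrow> P n x \<Longrightarrow> P m (act X n m f x)"
    and Q: "\<And>n m f x. Bmor n m f \<Longrightarrow> x \<in> cells X n \<Longrightarrow> Q n x \<Longrightarrow> Q m (act X n m f x)"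
    and cover: "\<And>n x. x \<in> cells X n \<Longrightarrow> P n x \<or> Q n x"
    and \<phi>: "\<And>n x. x \<in> cells X n \<Longrightarrow> P n x \<Longrightarrow> \<phi> n x \<in> cells Y n"
      "\<And>n m f x. Bmor n m f \<Longrightarrow> x \<in> cells X n \<Longrightarrow> P n x \<Longrightarrow>
         \<phi> m (act X n m f x) = act Y n m f (\<phi> n x)"
    and \<chi>: "\<And>n x. x \<in> cells X n \<Longrightarrow> Q n x \<Longrightarrow> \<chi> n x \<in> cells Y n"
      "\<And>n m f x. Bmor n m f \<Longrightarrow> x \<in> cells X n \<Longrightarrow> Q n x \<Longrightarrow>
         \<chi> m (act X n m f x) = act Y n m f (\<chi> n x)"
    and agree: "\<And>n x. x \<in> cells X n \<Longrightarrow> P n x \<Longrightarrow> Q n x \<Longrightarrow> \<phi> n x = \<chi> n x"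
  shows "cmap X Y (restr X (\<lambda>n x. if P n x then \<phi> n x else \<chi> n x))"
proof (rule cmap_restrI[OF X])
  fix x n assume "x \<in> cells X n"
  then show "(if P n x then \<phi> n x else \<chi> n x) \<in> cells Y n"
    using \<phi>(1)[of x n] \<chi>(1)[of x n] cover[of x n] by auto
next
  fix n m f x assume f: "Bmor n m f" and x: "x \<in> cells X n"
  have fx: "act X n m f x \<in> cells X m" using cubical_setD[OF X f x] .
  show "(if P m (act X n m f x) then \<phi> m (act X n m f x) else \<chi> m (act X n m f x))
      = act Y n m f (if P n x then \<phi> n x else \<chi> n x)"
    using P[OF f x] Q[OF f x] cover[OF x] \<phi>(2)[OF f x] \<chi>(2)[OF f x] agree[OF fx] by auto
qed

definition pr1 :: "bpt \<Rightarrow> bpt" where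
  "pr1 = (\<lambda>z. case z of Bot \<Rightarrow> Bot | Top \<Rightarrow> Top | Var i \<Rightarrow> if i = 1 then Var 1 else Bot)"

definition pr2 :: "bpt \<Rightarrow> bpt" where
  "pr2 = (\<lambda>z. case z of Bot \<Rightarrow> Bot | Top \<Rightarrow> Top | Var i \<Rightarrow> if i = 1 then Var 2 else Bot)"

definition pair :: "(bpt \<Rightarrow> bpt) \<Rightarrow> (bpt \<Rightarrow> bpt) \<Rightarrow> bpt \<Rightarrow> bpt" where
  "pair h1 h2 = (\<lambda>z. case z of Bot \<Rightarrow> Bot | Top \<Rightarrow> Top
     | Var i \<Rightarrow> if i = 1 then h1 (Var 1) else if i = 2 then h2 (Var 1) else Bot)"

lemma Bmor_pr1 [simp]: "Bmor 1 2 pr1" and Bmor_pr2 [simp]: "Bmor 1 2 pr2"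
  by (auto simp: Bmor_def pr1_def pr2_def)

lemma Bmor_comp_pr [simp]: "Bmor 2 m g \<Longrightarrow> Bmor 1 m (g \<circ> pr1)" "Bmor 2 m g \<Longrightarrow> Bmor 1 m (g \<circ> pr2)"
  by (auto intro: Bmor_comp[OF Bmor_pr1] Bmor_comp[OF Bmor_pr2])

lemma Bmor_pair: "Bmor 1 m h1 \<Longrightarrow> Bmor 1 m h2 \<Longrightarrow> Bmor 2 m (pair h1 h2)"
  by (auto simp: Bmor_def pair_def)

lemma pair_Var [simp]: "pair h1 h2 (Var 1) = h1 (Var 1)" "pair h1 h2 (Var 2) = h2 (Var 1)"
  by (auto simp: pair_def)

lemma pr_Var [simp]: "pr1 (Var 1) = Var 1" "pr2 (Var 1) = Var 2"
  by (auto simp: pr1_def pr2_def)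

lemma comp_pair: "Bmor n m f \<Longrightarrow> f \<circ> pair h1 h2 = pair (f \<circ> h1) (f \<circ> h2)"
  by (rule ext, case_tac x) (auto simp: pair_def Bmor_def)

lemma pair_pr1: "Bmor 1 m h1 \<Longrightarrow> Bmor 1 m h2 \<Longrightarrow> pair h1 h2 \<circ> pr1 = h1"
  by (rule Bmor_eqI[of 1 m _ m]) (auto intro: Bmor_comp[OF Bmor_pr1] Bmor_pair)

lemma pair_pr2: "Bmor 1 m h1 \<Longrightarrow> Bmor 1 m h2 \<Longrightarrow> pair h1 h2 \<circ> pr2 = h2"
  by (rule Bmor_eqI[of 1 m _ m]) (auto intro: Bmor_comp[OF Bmor_pr2] Bmor_pair)

lemma pair_pr1_pr2: "Bmor 2 m g \<Longrightarrow> pair (g \<circ> pr1) (g \<circ> pr2) = g"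
proof (rule Bmor_eqI[of 2 m _ m])
  fix i :: nat assume "1 \<le> i" "i \<le> 2"
  then have "i = 1 \<or> i = 2" by auto
  then show "pair (g \<circ> pr1) (g \<circ> pr2) (Var i) = g (Var i)" by auto
qed (auto intro: Bmor_pair Bmor_comp[OF Bmor_pr1] Bmor_comp[OF Bmor_pr2])

definition cube_of_path ::
    "(nat \<Rightarrow> (bpt \<Rightarrow> bpt) \<Rightarrow> nat \<Rightarrow> (bpt \<Rightarrow> bpt) \<times> (bpt \<Rightarrow> bpt) \<Rightarrow> 'a) \<Rightarrow> nat \<Rightarrow> (bpt \<Rightarrow> bpt) \<Rightarrow> 'a" where
  "cube_of_path w = restr (repr 2) (\<lambda>m g. uncurry_cs II II w m (g \<circ> pr1, g \<circ> pr2))"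

definition path_of_cube ::
    "(nat \<Rightarrow> (bpt \<Rightarrow> bpt) \<Rightarrow> 'a) \<Rightarrow> nat \<Rightarrow> (bpt \<Rightarrow> bpt) \<Rightarrow> nat \<Rightarrow> (bpt \<Rightarrow> bpt) \<times> (bpt \<Rightarrow> bpt) \<Rightarrow> 'a" where
  "path_of_cube \<psi> = curry_cs II II (restr (prod_cs II II) (\<lambda>m (h1, h2). \<psi> m (pair h1 h2)))"

lemma cube_of_path_apply:
  "Bmor 2 m g \<Longrightarrow> cube_of_path w m g = w m (g \<circ> pr1) m (idB m, g \<circ> pr2)"
  by (simp add: cube_of_path_def uncurry_cs_apply)

lemma path_of_cube_apply:
  "Bmor 1 k h \<Longrightarrow> Bmor k m a \<Longrightarrow> Bmor 1 m b \<Longrightarrow> path_of_cube \<psi> k h m (a, b) = \<psi> m (pair (a \<circ> h) b)"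
  by (simp add: path_of_cube_def curry_cs_apply Bmor_comp)

lemma cmap_cube_of_path:
  assumes w: "cmap II (expo II A) w"
  shows "cmap (repr 2) A (cube_of_path w)"
proof -
  note uw = cmap_uncurry_cs[OF cubical_set_repr cubical_set_repr w]
  show ?thesis unfolding cube_of_path_def
  proof (rule cmap_restrI[OF cubical_set_repr])
    fix g m assume "g \<in> cells (repr 2) m"
    then show "uncurry_cs II II w m (g \<circ> pr1, g \<circ> pr2) \<in> cells A m"
      using cmapD(1)[OF uw, of "(g \<circ> pr1, g \<circ> pr2)" m] by simp
  next
    fix n m f g assume f: "Bmor n m f" and "g \<in> cells (repr 2) n"
    then show "uncurry_cs II II w m (act (repr 2) n m f g \<circ> pr1, act (repr 2) n m f g \<circ> pr2)
        = act A n m f (uncurry_cs II II w n (g \<circ> pr1, g \<circ> pr2))"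
      using cmapD(2)[OF uw f, of "(g \<circ> pr1, g \<circ> pr2)"] by (simp add: Bmor_comp o_assoc)
  qed
qed

lemma cmap_path_of_cube:
  assumes \<psi>: "cmap (repr 2) A \<psi>"
  shows "cmap II (expo II A) (path_of_cube \<psi>)"
  unfolding path_of_cube_def
proof (intro cmap_curry_cs cubical_set_repr cmap_restr_prodI, simp_all)
  fix h1 h2 n assume "Bmor 1 n h1" "Bmor 1 n h2"
  then show "\<psi> n (pair h1 h2) \<in> cells A n"
    using cmapD(1)[OF \<psi>] Bmor_pair by simp
next
  fix n m f h1 h2 assume "Bmor n m f" "Bmor 1 n h1" "Bmor 1 n h2"
  then show "\<psi> m (pair (f \<circ> h1) (f \<circ> h2)) = act A n m f (\<psi> n (pair h1 h2))"
    using cmapD(2)[OF \<psi>, of n m f "pair h1 h2"] Bmor_pair by (simp add: comp_pair)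
qed

lemma pmap_apply:
  "cmap (prod_cs (repr c) II) A \<phi> \<Longrightarrow> pmap A c \<phi> = (\<phi> c (idB c, ep False), \<phi> c (idB c, ep True))"
  by (simp add: pmap_def)

lemma pair_ep_in_obox: "Bmor 1 m h \<Longrightarrow> pair (ep d) h \<in> cells (obox 2 (\<not> d)) m"
  by (simp add: obox2_cells Bmor_pair)

lemma pair_in_obox_ep: "Bmor 1 m h \<Longrightarrow> pair h (ep b) \<in> cells (obox 2 e) m"
  by (auto simp: obox2_cells Bmor_pair)

text \<open>The lifting problem read off a box: its face \<open>x\<^sub>1 = d\<close> as a point of \<open>A\<^sup>I\<close>, and its
  faces \<open>x\<^sub>2 = 0, 1\<close> as a path in \<open>A \<times> A\<close>.\<close>

definition box_top ::
    "bool \<Rightarrow> (nat \<Rightarrow> (bpt \<Rightarrow> bpt) \<Rightarrow> 'a) \<Rightarrow> nat \<Rightarrow> (bpt \<Rightarrow> bpt) \<Rightarrow> nat \<Rightarrow> (bpt \<Rightarrow> bpt) \<times> (bpt \<Rightarrow> bpt) \<Rightarrow> 'a" where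
  "box_top d \<phi> = curry_cs (repr 0) II (restr (prod_cs (repr 0) II) (\<lambda>m (_, h). \<phi> m (pair (ep d) h)))"

definition box_sides :: "(nat \<Rightarrow> (bpt \<Rightarrow> bpt) \<Rightarrow> 'a) \<Rightarrow> nat \<Rightarrow> (bpt \<Rightarrow> bpt) \<Rightarrow> 'a \<times> 'a" where
  "box_sides \<phi> = restr II (\<lambda>m h. (\<phi> m (pair h (ep False)), \<phi> m (pair h (ep True))))"

lemma box_top_apply: "Bmor 1 m h \<Longrightarrow> box_top d \<phi> m bmor0 m (idB m, h) = \<phi> m (pair (ep d) h)"
  by (simp add: box_top_def curry_cs_apply Bmor_0_iff comp_bmor0[OF Bmor_idB])

lemma cmap_box_top:
  assumes \<phi>: "cmap (obox 2 (\<not> d)) A \<phi>"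
  shows "cmap (repr 0) (expo II A) (box_top d \<phi>)"
  unfolding box_top_def
proof (intro cmap_curry_cs cubical_set_repr cmap_restr_prodI, simp_all)
  fix h n assume "Bmor 1 n h"
  then show "\<phi> n (pair (ep d) h) \<in> cells A n"
    using cmapD(1)[OF \<phi> pair_ep_in_obox] by blast
next
  fix n m f h assume f: "Bmor n m f" and h: "Bmor 1 n h"
  then show "\<phi> m (pair (ep d) (f \<circ> h)) = act A n m f (\<phi> n (pair (ep d) h))"
    using cmapD(2)[OF \<phi> f pair_ep_in_obox[OF h]] by (simp add: comp_pair comp_ep)
qed

lemma cmap_box_sides:
  assumes \<phi>: "cmap (obox 2 e) A \<phi>"
  shows "cmap II (prod_cs A A) (box_sides \<phi>)"
  unfolding box_sides_def
proof (rule cmap_restrI[OF cubical_set_repr])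
  fix h n assume "h \<in> cells II n"
  then show "(\<phi> n (pair h (ep False)), \<phi> n (pair h (ep True))) \<in> cells (prod_cs A A) n"
    using cmapD(1)[OF \<phi> pair_in_obox_ep] by simp
next
  fix n m f h assume f: "Bmor n m f" and "h \<in> cells II n"
  then show "(\<phi> m (pair (act II n m f h) (ep False)), \<phi> m (pair (act II n m f h) (ep True)))
      = act (prod_cs A A) n m f (\<phi> n (pair h (ep False)), \<phi> n (pair h (ep True)))"
    using cmapD(2)[OF \<phi> f pair_in_obox_ep] by (simp add: comp_pair comp_ep)
qed

lemma box_square_commutes:
  assumes "cmap (obox 2 (\<not> d)) A \<phi>"
  shows "meq (repr 0) (cmp (pmap A) (box_top d \<phi>)) (cmp (box_sides \<phi>) (endpt d))"
  unfolding meq_def cmp_def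
proof (intro allI ballI)
  fix n x assume "x \<in> cells (repr 0) n"
  then have x: "x = bmor0" by (simp add: Bmor_0_iff)
  have "cmap (prod_cs (repr n) II) A (box_top d \<phi> n bmor0)"
    using cmapD(1)[OF cmap_box_top[OF assms], of bmor0 n] by (simp add: Bmor_0_iff)
  then show "pmap A n (box_top d \<phi> n x) = box_sides \<phi> n (endpt d n x)"
    using x by (simp add: pmap_apply box_top_apply endpt_bmor0 box_sides_def)
qed

lemma cube_of_path_extends_box:
  assumes w: "cmap II (expo II A) w"
    and top: "meq (repr 0) (cmp w (endpt d)) (box_top d \<phi>)"
    and sides: "meq II (cmp (pmap A) w) (box_sides \<phi>)"
  shows "meq (obox 2 (\<not> d)) (cube_of_path w) \<phi>"
  unfolding meq_def
proof (intro allI ballI)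
  fix m g assume "g \<in> cells (obox 2 (\<not> d)) m"
  then have g: "Bmor 2 m g" and faces: "g (Var 1) = bval d \<or> (\<exists>b. g (Var 2) = bval b)"
    by (auto simp: obox2_cells)
  show "cube_of_path w m g = \<phi> m g"
  proof (cases "g (Var 1) = bval d")
    case True
    then have "g \<circ> pr1 = ep d" using g by (intro Bmor1_eq_ep[of m]) auto
    then have "pair (ep d) (g \<circ> pr2) = g" using pair_pr1_pr2[OF g] by simp
    moreover have "w m (ep d) = box_top d \<phi> m bmor0"
      using top unfolding meq_def cmp_def by (auto simp: Bmor_0_iff endpt_bmor0)
    ultimately show ?thesis
      using g \<open>g \<circ> pr1 = ep d\<close> by (simp add: cube_of_path_apply box_top_apply)
  next
    case False
    with faces obtain b where b: "g (Var 2) = bval b" by blast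
    then have "g \<circ> pr2 = ep b" using g by (intro Bmor1_eq_ep[of m]) auto
    then have "pair (g \<circ> pr1) (ep b) = g" using pair_pr1_pr2[OF g] by simp
    moreover have "pmap A m (w m (g \<circ> pr1)) = box_sides \<phi> m (g \<circ> pr1)"
      using sides g unfolding meq_def cmp_def by simp
    moreover have "cmap (prod_cs (repr m) II) A (w m (g \<circ> pr1))"
      using cmapD(1)[OF w, of "g \<circ> pr1" m] g by simp
    ultimately show ?thesis
      using g \<open>g \<circ> pr2 = ep b\<close>
      by (cases b) (simp_all add: cube_of_path_apply pmap_apply box_sides_def)
  qed
qed

lemma path_lifting_imp_box_filling:
  "path_lifting (expo II A) (prod_cs A A) (pmap A) \<Longrightarrow> box_filling 2 A"
  unfolding box_filling_def
proof (intro allI impI)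
  fix e \<phi>
  assume lift: "path_lifting (expo II A) (prod_cs A A) (pmap A)" and \<phi>: "cmap (obox 2 e) A \<phi>"
  then have \<phi>': "cmap (obox 2 (\<not> \<not> e)) A \<phi>" by simp
  obtain w where w: "cmap II (expo II A) w"
    and "meq (repr 0) (cmp w (endpt (\<not> e))) (box_top (\<not> e) \<phi>)"
    and "meq II (cmp (pmap A) w) (box_sides \<phi>)"
    using lift cmap_box_top[OF \<phi>'] cmap_box_sides[OF \<phi>] box_square_commutes[OF \<phi>']
    unfolding path_lifting_def by blast
  then have "meq (obox 2 e) (cube_of_path w) \<phi>"
    using cube_of_path_extends_box[OF w, where d = "\<not> e"] by simp
  then show "\<exists>\<psi>. cmap (repr 2) A \<psi> \<and> meq (obox 2 e) \<psi> \<phi>"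
    using cmap_cube_of_path[OF w] by blast
qed

definition endpoint_sel :: "bool \<Rightarrow> 'a \<times> 'a \<Rightarrow> 'a" where
  "endpoint_sel b p = (if b then snd p else fst p)"

lemma endpoint_sel_in_cells: "p \<in> cells (prod_cs A A) n \<Longrightarrow> endpoint_sel b p \<in> cells A n"
  by (cases p) (simp add: endpoint_sel_def)

lemma endpoint_sel_act: "endpoint_sel b (act (prod_cs A A) n m f p) = act A n m f (endpoint_sel b p)"
  by (cases p) (simp add: endpoint_sel_def)

lemma endpoint_sel_pmap:
  "cmap (prod_cs (repr c) II) A \<phi> \<Longrightarrow> endpoint_sel b (pmap A c \<phi>) = \<phi> c (idB c, ep b)"
  by (simp add: endpoint_sel_def pmap_apply)

definition square_box ::
    "bool \<Rightarrow> (nat \<Rightarrow> (bpt \<Rightarrow> bpt) \<Rightarrow> nat \<Rightarrow> (bpt \<Rightarrow> bpt) \<times> (bpt \<Rightarrow> bpt) \<Rightarrow> 'a)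
      \<Rightarrow> (nat \<Rightarrow> (bpt \<Rightarrow> bpt) \<Rightarrow> 'a \<times> 'a) \<Rightarrow> nat \<Rightarrow> (bpt \<Rightarrow> bpt) \<Rightarrow> 'a" where
  "square_box d u v = restr (obox 2 (\<not> d)) (\<lambda>m g.
     if g (Var 1) = bval d then uncurry_cs (repr 0) II u m (bmor0, g \<circ> pr2)
     else endpoint_sel (g (Var 2) = Top) (v m (g \<circ> pr1)))"

context
  fixes d :: bool and u :: "nat \<Rightarrow> (bpt \<Rightarrow> bpt) \<Rightarrow> nat \<Rightarrow> (bpt \<Rightarrow> bpt) \<times> (bpt \<Rightarrow> bpt) \<Rightarrow> 'a"
    and v :: "nat \<Rightarrow> (bpt \<Rightarrow> bpt) \<Rightarrow> 'a \<times> 'a" and A :: "'a cset"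
  assumes u: "cmap (repr 0) (expo II A) u" and v: "cmap II (prod_cs A A) v"
    and square: "meq (repr 0) (cmp (pmap A) u) (cmp v (endpt d))"
begin

lemma square_corner: "uncurry_cs (repr 0) II u m (bmor0, ep b) = endpoint_sel b (v m (ep d))"
proof -
  have "cmap (prod_cs (repr m) II) A (u m bmor0)"
    using cmapD(1)[OF u, of bmor0 m] by (simp add: Bmor_0_iff)
  moreover have "pmap A m (u m bmor0) = v m (ep d)"
    using square unfolding meq_def cmp_def by (auto simp: Bmor_0_iff endpt_bmor0)
  ultimately show ?thesis
    by (auto simp: uncurry_cs_apply Bmor_0_iff endpoint_sel_pmap dest: sym)
qed

lemma square_box_top:
  "Bmor 2 m g \<Longrightarrow> g (Var 1) = bval d \<Longrightarrow>
     square_box d u v m g = uncurry_cs (repr 0) II u m (bmor0, g \<circ> pr2)"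
  by (simp add: square_box_def obox2_cells)

lemma square_box_side:
  assumes g: "Bmor 2 m g" and b: "g (Var 2) = bval b"
  shows "square_box d u v m g = endpoint_sel b (v m (g \<circ> pr1))"
proof (cases "g (Var 1) = bval d")
  case True
  then have "g \<circ> pr1 = ep d" "g \<circ> pr2 = ep b"
    using g b by (auto intro: Bmor1_eq_ep[of m])
  then show ?thesis
    using square_box_top[OF g True] square_corner by simp
next
  case False
  have "g \<in> cells (obox 2 (\<not> d)) m" using g b by (auto simp: obox2_cells)
  with False show ?thesis using b by (simp add: square_box_def bval_def)
qed

lemma cmap_square_box: "cmap (obox 2 (\<not> d)) A (square_box d u v)"
proof -
  note uu = cmap_uncurry_cs[OF cubical_set_repr cubical_set_repr u]
  show ?thesis unfolding square_box_def
  proof (rule cmap_glue[OF cubical_set_obox, where Q = "\<lambda>m g. \<exists>b. g (Var 2) = bval b"],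
      simp_all add: obox2_cells Bmor_bval)
    fix n m f g assume "Bmor n m f" "\<exists>b. g (Var 2) = bval b"
    then show "\<exists>b. f (g (Var 2)) = bval b" by (auto simp: Bmor_bval)
  next
    fix g n assume "Bmor 2 n g"
    then show "uncurry_cs (repr 0) II u n (bmor0, g \<circ> pr2) \<in> cells A n"
      using cmapD(1)[OF uu, of "(bmor0, g \<circ> pr2)" n] by (simp add: Bmor_0_iff)
  next
    fix n m f g assume "Bmor n m f" "Bmor 2 n g"
    then show "uncurry_cs (repr 0) II u m (bmor0, f \<circ> g \<circ> pr2)
        = act A n m f (uncurry_cs (repr 0) II u n (bmor0, g \<circ> pr2))"
      using cmapD(2)[OF uu, of n m f "(bmor0, g \<circ> pr2)"]
      by (simp add: Bmor_0_iff comp_bmor0 o_assoc)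
  next
    fix g n assume "Bmor 2 n g"
    then show "endpoint_sel (g (Var 2) = Top) (v n (g \<circ> pr1)) \<in> cells A n"
      using cmapD(1)[OF v, of "g \<circ> pr1" n] by (simp add: endpoint_sel_in_cells)
  next
    fix n m f g assume f: "Bmor n m f" and "Bmor 2 n g" "\<exists>b. g (Var 2) = bval b"
    then show "endpoint_sel (f (g (Var 2)) = Top) (v m (f \<circ> g \<circ> pr1))
        = act A n m f (endpoint_sel (g (Var 2) = Top) (v n (g \<circ> pr1)))"
      using cmapD(2)[OF v f, of "g \<circ> pr1"] Bmor_bval[OF f]
      by (auto simp: o_assoc endpoint_sel_act)
  next
    fix g n assume "Bmor 2 n g" "g (Var 1) = bval d" "\<exists>b. g (Var 2) = bval b"
    then show "uncurry_cs (repr 0) II u n (bmor0, g \<circ> pr2)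
        = endpoint_sel (g (Var 2) = Top) (v n (g \<circ> pr1))"
      using square_box_side square_box_top by (metis bval_def)
  qed
qed

context
  fixes \<psi> :: "nat \<Rightarrow> (bpt \<Rightarrow> bpt) \<Rightarrow> 'a"
  assumes \<psi>: "cmap (repr 2) A \<psi>" and fills: "meq (obox 2 (\<not> d)) \<psi> (square_box d u v)"
begin

lemma path_of_cube_endpt: "meq (repr 0) (cmp (path_of_cube \<psi>) (endpt d)) u"
  unfolding meq_def cmp_def
proof (intro allI ballI)
  fix n x assume "x \<in> cells (repr 0) n"
  then have x: "x = bmor0" by (simp add: Bmor_0_iff)
  have "meq (prod_cs (repr n) II) (path_of_cube \<psi> n (ep d)) (u n bmor0)"
    unfolding meq_def
  proof (intro allI ballI)
    fix m z assume "z \<in> cells (prod_cs (repr n) II) m"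
    then obtain a b where z: "z = (a, b)" and a: "Bmor n m a" and b: "Bmor 1 m b"
      by (cases z) auto
    have "path_of_cube \<psi> n (ep d) m (a, b) = \<psi> m (pair (ep d) b)"
      using a b by (simp add: path_of_cube_apply comp_ep)
    also have "\<dots> = square_box d u v m (pair (ep d) b)"
      using fills pair_ep_in_obox[OF b] unfolding meq_def by blast
    also have "\<dots> = uncurry_cs (repr 0) II u m (bmor0, b)"
      using b by (simp add: square_box_top Bmor_pair pair_pr2)
    also have "\<dots> = u n bmor0 m (a, b)"
      using cmap_expo_apply[OF u _ a, of bmor0 b] a b
      by (simp add: uncurry_cs_apply Bmor_0_iff comp_bmor0)
    finally show "path_of_cube \<psi> n (ep d) m z = u n bmor0 m z" using z by simp
  qed
  then show "path_of_cube \<psi> n (endpt d n x) = u n x"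
    using cmapD(1)[OF cmap_path_of_cube[OF \<psi>], of "ep d" n] cmapD(1)[OF u, of bmor0 n] x
    by (auto simp: endpt_bmor0 Bmor_0_iff intro: cmap_eqI)
qed

lemma pmap_path_of_cube: "meq II (cmp (pmap A) (path_of_cube \<psi>)) v"
  unfolding meq_def cmp_def
proof (intro allI ballI)
  fix n h assume "h \<in> cells II n"
  then have h: "Bmor 1 n h" by simp
  have "path_of_cube \<psi> n h n (idB n, ep b) = endpoint_sel b (v n h)" for b
  proof -
    have "path_of_cube \<psi> n h n (idB n, ep b) = \<psi> n (pair h (ep b))"
      using h by (simp add: path_of_cube_apply idB_comp)
    also have "\<dots> = square_box d u v n (pair h (ep b))"
      using fills pair_in_obox_ep[OF h] unfolding meq_def by blast
    also have "\<dots> = endpoint_sel b (v n h)"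
      using h by (simp add: square_box_side Bmor_pair pair_pr1)
    finally show ?thesis .
  qed
  moreover have "cmap (prod_cs (repr n) II) A (path_of_cube \<psi> n h)"
    using cmapD(1)[OF cmap_path_of_cube[OF \<psi>], of h n] h by simp
  ultimately show "pmap A n (path_of_cube \<psi> n h) = v n h"
    by (simp add: pmap_apply endpoint_sel_def)
qed

end

end

lemma box_filling_imp_path_lifting:
  "box_filling 2 A \<Longrightarrow> path_lifting (expo II A) (prod_cs A A) (pmap A)"
  unfolding path_lifting_def
proof (intro allI impI, elim conjE)
  fix d u v
  assume fill: "box_filling 2 A"
    and u: "cmap (repr 0) (expo II A) u" and v: "cmap II (prod_cs A A) v"
    and square: "meq (repr 0) (cmp (pmap A) u) (cmp v (endpt d))"
  obtain \<psi> where \<psi>: "cmap (repr 2) A \<psi>" and "meq (obox 2 (\<not> d)) \<psi> (square_box d u v)"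
    using fill cmap_square_box[OF u v square] unfolding box_filling_def by blast
  then show "\<exists>w. cmap II (expo II A) w \<and> meq (repr 0) (cmp w (endpt d)) u
      \<and> meq II (cmp (pmap A) w) v"
    using cmap_path_of_cube path_of_cube_endpt[OF u v square] pmap_path_of_cube[OF u v square]
    by blast
qed

theorem proposition2p8:
  fixes A :: "'a cset"
  assumes "cubical_set A"
  shows "path_lifting (expo II A) (prod_cs A A) (pmap A) \<longleftrightarrow> box_filling 2 A"
  using path_lifting_imp_box_filling box_filling_imp_path_lifting by blast

end
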